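(* Let $G$ be a biconnected graph. If all 2.5-connected components of $G$ satisfy Hajós' conjecture, then $G$ satisfies Hajós' conjecture. In particular, every graph satisfies Hajós' conjecture if and only if every 2.5-connected graph satisfies Hajós' conjecture.
   Context: Graphs are finite, may have parallel edges (cycles of length 2 allowed), no loops. For a graph $H$, $m(H)$ is the minimum number of edges whose removal makes $H$ simple. A graph $H$ satisfies Hajós' conjecture if, whenever $H$ is Eulerian, its edge set can be decomposed into at most $\frac12(|V(H)|+m(H)-1)$ cycles (each edge in exactly one cycle). Biconnected: connected and for all pairwise distinct $u,v,w$ there is a $u$-$v$ path avoiding $w$. For biconnected $H$ not a triangle, $(c,uv)\in V(H)\times E(H)$ is a vertex-edge-separator if $H-uv-c$ is disconnected; then it has exactly two components $C_u\ni u,C_v\ni v$. For $a\in\{u,v\}$ with other endpoint $b$, let $H_a=H[V(C_a)\cup\{c\}]$; if $|E(H_a)|\ge2$, the 2.5-split replaces $H$ by $H_a+ac$ and $H[V(C_b)\cup\{c\}]+ba+ac$, where the two new edges $ac$ are (virtual) edges corresponding to each other. $H$ is 2.5-connected if biconnected with no vertex-edge-separator. Applying 2.5-splits until none is possible and then merging (gluing at corresponding virtual edges and deleting them) the resulting triangles as much as possible into cycles gives the 2.5-connected components of $G$, regarded as ordinary graphs. *)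

theory Defs
  imports "HOL-Library.Multiset"
begin

(* A (multi)graph: finite nonempty vertex set V and a multiset E of edges,
   each edge being a 2-element subset of V (parallel edges allowed, no loops). *)
definition wf_graph :: "'a set \<Rightarrow> 'a set multiset \<Rightarrow> bool" where
  "wf_graph V E \<longleftrightarrow> finite V \<and> V \<noteq> {} \<and> (\<forall>e\<in>#E. e \<subseteq> V \<and> card e = 2)"

definition degree :: "'a set multiset \<Rightarrow> 'a \<Rightarrow> nat" where
  "degree E v = size (filter_mset (\<lambda>e. v \<in> e) E)"

definition eulerian :: "'a set \<Rightarrow> 'a set multiset \<Rightarrow> bool" where
  "eulerian V E \<longleftrightarrow> (\<forall>v\<in>V. even (degree E v))"

definition simple_edges :: "'a set multiset \<Rightarrow> bool" where
  "simple_edges E \<longleftrightarrow> (\<forall>e. count E e \<le> 1)"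

definition mult_excess :: "'a set multiset \<Rightarrow> nat" where
  "mult_excess E = Min {size F | F. F \<subseteq># E \<and> simple_edges (E - F)}"

definition cycle_edges :: "'a list \<Rightarrow> 'a set multiset" where
  "cycle_edges vs = mset (map (\<lambda>i. {vs ! i, vs ! (Suc i mod length vs)}) [0..<length vs])"

(* a cycle (length 2 allowed: two parallel edges) given by its edge multiset *)
definition is_cycle :: "'a set multiset \<Rightarrow> bool" where
  "is_cycle C \<longleftrightarrow> (\<exists>vs. distinct vs \<and> length vs \<ge> 2 \<and> C = cycle_edges vs)"

definition hajos :: "'a set \<Rightarrow> 'a set multiset \<Rightarrow> bool" where
  "hajos V E \<longleftrightarrow> eulerian V E \<longrightarrow>
     (\<exists>cs. (\<forall>C\<in>set cs. is_cycle C) \<and> sum_list cs = E \<and>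
           2 * int (length cs) \<le> int (card V) + int (mult_excess E) - 1)"

definition reach :: "'a set multiset \<Rightarrow> 'a \<Rightarrow> 'a \<Rightarrow> bool" where
  "reach E = (\<lambda>x y. {x, y} \<in># E)\<^sup>*\<^sup>*"

definition connected_graph :: "'a set \<Rightarrow> 'a set multiset \<Rightarrow> bool" where
  "connected_graph V E \<longleftrightarrow> V \<noteq> {} \<and> (\<forall>x\<in>V. \<forall>y\<in>V. reach E x y)"

definition biconnected :: "'a set \<Rightarrow> 'a set multiset \<Rightarrow> bool" where
  "biconnected V E \<longleftrightarrow> connected_graph V E \<and>
     (\<forall>u\<in>V. \<forall>v\<in>V. \<forall>w\<in>V. u \<noteq> v \<and> u \<noteq> w \<and> v \<noteq> w \<longrightarrow>
        reach (filter_mset (\<lambda>e. w \<notin> e) E) u v)"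

definition triangle :: "'a set \<Rightarrow> 'a set multiset \<Rightarrow> bool" where
  "triangle V E \<longleftrightarrow> (\<exists>x y z. distinct [x, y, z] \<and> V = {x, y, z} \<and>
      E = {#{x, y}, {y, z}, {x, z}#})"

definition is_ve_sep :: "'a set \<Rightarrow> 'a set multiset \<Rightarrow> 'a \<Rightarrow> 'a \<Rightarrow> 'a \<Rightarrow> bool" where
  "is_ve_sep V E c u v \<longleftrightarrow> c \<in> V \<and> {u, v} \<in># E \<and> c \<notin> {u, v} \<and>
     \<not> connected_graph (V - {c}) (filter_mset (\<lambda>e. c \<notin> e) (E - {#{u, v}#}))"

definition conn25 :: "'a set \<Rightarrow> 'a set multiset \<Rightarrow> bool" where
  "conn25 V E \<longleftrightarrow> biconnected V E \<and>
     (\<not> triangle V E \<longrightarrow> \<not> (\<exists>c u v. is_ve_sep V E c u v))"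

(* Pieces of the decomposition: vertex set and labelled edges;
   label None = real edge, Some k = virtual edge of the corresponding pair k. *)
type_synonym 'a piece = "'a set \<times> ('a set \<times> nat option) multiset"

definition split_step :: "'a piece multiset \<Rightarrow> 'a piece multiset \<Rightarrow> bool" where
  "split_step F F' \<longleftrightarrow> (\<exists>V E rest c u v l a b k.
     F = add_mset (V, E) rest \<and>
     biconnected V (image_mset fst E) \<and> \<not> triangle V (image_mset fst E) \<and>
     ({u, v}, l) \<in># E \<and> is_ve_sep V (image_mset fst E) c u v \<and>
     ((a, b) = (u, v) \<or> (a, b) = (v, u)) \<and>
     (let E0 = filter_mset (\<lambda>e. c \<notin> e) (image_mset fst E - {#{u, v}#});
          Ca = {x. reach E0 a x};
          Cb = {x. reach E0 b x};
          Ea = filter_mset (\<lambda>e. fst e \<subseteq> Ca \<union> {c}) E;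
          Eb = filter_mset (\<lambda>e. fst e \<subseteq> Cb \<union> {c}) E
      in size Ea \<ge> 2 \<and>
         (\<forall>P\<in>#F. \<forall>e\<in>#snd P. snd e \<noteq> Some k) \<and>
         F' = add_mset (Ca \<union> {c}, add_mset ({a, c}, Some k) Ea)
                (add_mset (insert a (Cb \<union> {c}),
                           add_mset ({b, a}, l) (add_mset ({a, c}, Some k) Eb)) rest)))"

definition is_cycle_graph :: "'a set \<Rightarrow> 'a set multiset \<Rightarrow> bool" where
  "is_cycle_graph V E \<longleftrightarrow> (\<exists>vs. distinct vs \<and> length vs \<ge> 3 \<and> V = set vs \<and> E = cycle_edges vs)"

definition merge_step :: "'a piece multiset \<Rightarrow> 'a piece multiset \<Rightarrow> bool" where
  "merge_step F F' \<longleftrightarrow> (\<exists>V1 E1 V2 E2 rest e k.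
     F = add_mset (V1, E1) (add_mset (V2, E2) rest) \<and>
     is_cycle_graph V1 (image_mset fst E1) \<and> is_cycle_graph V2 (image_mset fst E2) \<and>
     (e, Some k) \<in># E1 \<and> (e, Some k) \<in># E2 \<and> V1 \<inter> V2 = e \<and>
     F' = add_mset (V1 \<union> V2, (E1 - {#(e, Some k)#}) + (E2 - {#(e, Some k)#})) rest)"

definition decomp25 :: "'a set \<Rightarrow> 'a set multiset \<Rightarrow> 'a piece multiset \<Rightarrow> bool" where
  "decomp25 V E F \<longleftrightarrow> (\<exists>F1. split_step\<^sup>*\<^sup>* {#(V, image_mset (\<lambda>e. (e, None)) E)#} F1 \<and>
      \<not> (\<exists>F'. split_step F1 F') \<and> merge_step\<^sup>*\<^sup>* F1 F \<and> \<not> (\<exists>F'. merge_step F F'))"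

end

theory Submission
  imports Defs
begin

text \<open>The Hajos bound \<open>2k \<le> |V| + m - 1\<close> on the number \<open>k\<close> of cycles survives the two
  operations that undo a decomposition. Gluing two graphs at at most one vertex: the vertex counts
  add up to at most \<open>|V| + 1\<close> and the excesses add, so the two cycle decompositions are simply
  concatenated. Undoing a 2.5-split at \<open>(c, ab)\<close>: the pieces \<open>H\<^sub>a + ac\<close> and
  \<open>H[C\<^sub>b \<union> {c}] + ba + ac\<close> have \<open>|V| + 2\<close> vertices and total excess at most \<open>m + 1\<close>, and the
  cycles through the virtual edge \<open>ac\<close> in the two pieces meet only in \<open>a\<close> and \<open>c\<close>; deleting both
  copies of \<open>ac\<close> splices them into one cycle, which saves the cycle that is needed. Merging
  cycle pieces is harmless, as cycles satisfy the conjecture. Conversely, by induction on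
  \<open>|V| + |E|\<close>: a graph that is not biconnected is glued at at most one vertex from smaller
  graphs, and a biconnected graph that is neither 2.5-connected nor a triangle has a separator
  with at least two edges on one side, where the split produces two smaller graphs.\<close>

section \<open>Multiplicity excess and degrees\<close>

lemma card_set_mset_le_size: "card (set_mset M) \<le> size M"
  by (induction M) (auto simp: card_insert_if)

lemma simple_edges_mset_set:
  assumes "simple_edges M"
  shows "mset_set (set_mset M) = M"
proof (rule multiset_eqI)
  fix x
  have "count M x \<le> 1" using assms unfolding simple_edges_def by blast
  then show "count (mset_set (set_mset M)) x = count M x"
    using count_eq_zero_iff[of M x] by (auto simp: count_mset_set')
qed

lemma mult_excess_eq: "mult_excess E = size E - card (set_mset E)"
proof -
  let ?S = "{size F | F. F \<subseteq># E \<and> simple_edges (E - F)}"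
  define F0 where "F0 = E - mset_set (set_mset E)"
  have sub: "mset_set (set_mset E) \<subseteq># E" by (rule mset_set_set_mset_msubset)
  then have "E - F0 = mset_set (set_mset E)"
    unfolding F0_def by (simp add: subset_mset.diff_diff_right)
  then have "simple_edges (E - F0)" unfolding simple_edges_def by (simp add: count_mset_set')
  then have in_S: "size F0 \<in> ?S" unfolding F0_def by force
  have size_F0: "size F0 = size E - card (set_mset E)"
    unfolding F0_def using sub by (simp add: size_Diff_submset)
  have lower: "size E - card (set_mset E) \<le> x" if x: "x \<in> ?S" for x
  proof -
    obtain F where F: "x = size F" "F \<subseteq># E" "simple_edges (E - F)" using x by blast
    have "size (E - F) = card (set_mset (E - F))"
      using simple_edges_mset_set[OF F(3)] by (metis size_mset_set)
    also have "\<dots> \<le> card (set_mset E)" by (intro card_mono) (auto dest: in_diffD)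
    finally show ?thesis using F(1,2) by (simp add: size_Diff_submset)
  qed
  have "finite ?S" by (rule finite_subset[of _ "{..size E}"]) (auto intro: size_mset_mono)
  then have "Min ?S = size F0" by (intro Min_eqI) (use lower size_F0 in_S in auto)
  then show ?thesis unfolding mult_excess_def using size_F0 by simp
qed

lemma mult_excess_plus:
  "set_mset A \<inter> set_mset B = {} \<Longrightarrow> mult_excess (A + B) = mult_excess A + mult_excess B"
  using card_set_mset_le_size[of A] card_set_mset_le_size[of B]
  by (simp add: mult_excess_eq card_Un_disjoint)

lemma mult_excess_le_add_mset: "mult_excess A \<le> mult_excess (add_mset e A)"
  using card_set_mset_le_size[of A]
  by (cases "e \<in># A") (auto simp: mult_excess_eq card_insert_if)

lemma mult_excess_add_mset_le: "mult_excess (add_mset e A) \<le> mult_excess A + 1"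
  using card_set_mset_le_size[of A]
  by (cases "e \<in># A") (auto simp: mult_excess_eq card_insert_if)

lemma mult_excess_add_mset_new: "e \<notin># A \<Longrightarrow> mult_excess (add_mset e A) = mult_excess A"
  by (simp add: mult_excess_eq)

lemma wf_graph_edgeE:
  assumes "wf_graph V E" "e \<in># E"
  obtains p q where "e = {p, q}" "p \<noteq> q" "p \<in> V" "q \<in> V"
  using assms unfolding wf_graph_def by (metis card_2_iff insert_subset)

lemma degree_plus [simp]: "degree (A + B) v = degree A v + degree B v"
  unfolding degree_def by simp

lemma degree_add_mset [simp]: "degree (add_mset e A) v = degree A v + (if v \<in> e then 1 else 0)"
  unfolding degree_def by simp

lemma degree_eq_0: "(\<And>e. e \<in># E \<Longrightarrow> v \<notin> e) \<Longrightarrow> degree E v = 0"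
  unfolding degree_def by (simp add: filter_mset_eq_mempty_iff)

lemma sum_degree_eq:
  assumes "finite W" "\<forall>e\<in>#E. e \<subseteq> W \<and> card e = 2"
  shows "(\<Sum>x\<in>W. degree E x) = 2 * size E"
  using assms(2)
proof (induction E)
  case (add e E)
  have e: "e \<subseteq> W" "card e = 2" using add.prems by auto
  have "(\<Sum>x\<in>W. if x \<in> e then 1 else (0::nat)) = card (W \<inter> e)"
    using assms(1) by (simp add: sum.If_cases Int_def)
  also have "\<dots> = 2" using e by (simp add: Int_absorb1)
  finally show ?case using add by (simp add: sum.distrib)
qed (simp add: degree_def)

lemma eulerian_if_even_but_one:
  assumes "finite W" "\<forall>e\<in>#E. e \<subseteq> W \<and> card e = 2" "s \<in> W"
    and even: "\<forall>x\<in>W - {s}. even (degree E x)"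
  shows "eulerian W E"
proof -
  have "(\<Sum>x\<in>W. degree E x) = degree E s + (\<Sum>x\<in>W - {s}. degree E x)"
    using assms(1,3) by (simp add: sum.remove)
  moreover have "even (\<Sum>x\<in>W - {s}. degree E x)" using even by (intro dvd_sum) auto
  ultimately have "even (degree E s)"
    using sum_degree_eq[OF assms(1,2)] by (metis dvd_add_left_iff dvd_triv_left)
  then show ?thesis using even unfolding eulerian_def by blast
qed

section \<open>Reachability\<close>

lemma reach_refl [simp]: "reach E x x"
  unfolding reach_def by simp

lemma reach_edge: "{x, y} \<in># E \<Longrightarrow> reach E x y"
  unfolding reach_def by (simp add: r_into_rtranclp)

lemma reach_trans: "reach E x y \<Longrightarrow> reach E y z \<Longrightarrow> reach E x z"
  unfolding reach_def by simp

lemma reach_sym: "reach E x y \<Longrightarrow> reach E y x"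
  unfolding reach_def
proof (induction rule: rtranclp_induct)
  case (step y z)
  have "{z, y} \<in># E" using step(2) by (simp add: insert_commute)
  then show ?case using step(3) by (simp add: converse_rtranclp_into_rtranclp)
qed simp

lemma reach_edge_iff: "{p, q} \<in># M \<Longrightarrow> reach M x p \<longleftrightarrow> reach M x q"
  by (meson reach_edge reach_sym reach_trans)

lemma reach_endpoint_in_edge: "reach E x y \<Longrightarrow> x = y \<or> (\<exists>e\<in>#E. y \<in> e)"
  unfolding reach_def by (induction rule: rtranclp_induct) auto

lemma reach_first_edge: "reach E x y \<Longrightarrow> x \<noteq> y \<Longrightarrow> \<exists>z. {x, z} \<in># E \<and> reach E z y"
  unfolding reach_def by (induction rule: converse_rtranclp_induct) auto

section \<open>Cycles as closed paths\<close>

fun path_edges :: "'a list \<Rightarrow> 'a set multiset" where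
  "path_edges [] = {#}"
| "path_edges [x] = {#}"
| "path_edges (x # y # xs) = add_mset {x, y} (path_edges (y # xs))"

lemma path_edges_Cons:
  "path_edges (y # zs) = path_edges zs + (if zs \<noteq> [] then {#{y, hd zs}#} else {#})"
  by (cases zs) auto

lemma path_edges_append:
  "path_edges (xs @ ys) = path_edges xs + path_edges ys +
     (if xs \<noteq> [] \<and> ys \<noteq> [] then {#{last xs, hd ys}#} else {#})"
  by (induction xs rule: path_edges.induct) (auto simp: path_edges_Cons)

lemma path_edges_rev: "path_edges (rev xs) = path_edges xs"
proof (induction xs)
  case (Cons x xs)
  have "path_edges (rev (x # xs)) = path_edges xs + (if xs \<noteq> [] then {#{hd xs, x}#} else {#})"
    using Cons.IH by (simp add: path_edges_append last_rev)
  then show ?case by (simp add: path_edges_Cons insert_commute)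
qed simp

lemma path_edges_memE:
  assumes "e \<in># path_edges vs"
  obtains xs x y ys where "vs = xs @ x # y # ys" "e = {x, y}"
proof -
  have "\<exists>xs x y ys. vs = xs @ x # y # ys \<and> e = {x, y}"
    using assms
  proof (induction vs rule: path_edges.induct)
    case (3 x y xs)
    show ?case
    proof (cases "e = {x, y}")
      case True then show ?thesis by (metis append_Nil)
    next
      case False
      then obtain as p q bs where "y # xs = as @ p # q # bs" "e = {p, q}" using 3 by auto
      then show ?thesis by (metis append_Cons)
    qed
  qed simp_all
  then show ?thesis using that by blast
qed

lemma set_subset_path_edges: "length vs \<ge> 2 \<Longrightarrow> set vs \<subseteq> \<Union> (set_mset (path_edges vs))"
proof (induction vs rule: path_edges.induct)
  case (3 x y xs)
  then show ?case by (cases xs) auto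
qed simp_all

lemma path_edges_conv_nth:
  "path_edges vs = mset (map (\<lambda>i. {vs ! i, vs ! Suc i}) [0..<length vs - 1])"
proof (induction vs rule: path_edges.induct)
  case (3 x y xs)
  have "[0..<length (x # y # xs) - 1] = 0 # map Suc [0..<length xs]"
    by (simp add: upt_conv_Cons map_Suc_upt del: upt_Suc)
  then show ?case using 3 by (simp add: comp_def)
qed simp_all

lemma cycle_edges_path_edges:
  assumes "vs \<noteq> []"
  shows "cycle_edges vs = add_mset {last vs, hd vs} (path_edges vs)"
proof -
  define n where "n = length vs"
  have n: "n \<ge> 1" using assms n_def by (cases vs) auto
  then have "[0..<n] = [0..<n - 1] @ [n - 1]"
    by (cases n) simp_all
  then have "map (\<lambda>i. {vs ! i, vs ! (Suc i mod n)}) [0..<n] =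
     map (\<lambda>i. {vs ! i, vs ! (Suc i mod n)}) [0..<n - 1] @
       [{vs ! (n - 1), vs ! (Suc (n - 1) mod n)}]"
    by simp
  moreover have "map (\<lambda>i. {vs ! i, vs ! (Suc i mod n)}) [0..<n - 1] =
      map (\<lambda>i. {vs ! i, vs ! Suc i}) [0..<n - 1]"
    by (intro map_cong) auto
  moreover have "{vs ! (n - 1), vs ! (Suc (n - 1) mod n)} = {last vs, hd vs}"
    using n assms n_def by (simp add: last_conv_nth hd_conv_nth)
  ultimately have "cycle_edges vs =
      mset (map (\<lambda>i. {vs ! i, vs ! Suc i}) [0..<n - 1]) + {#{last vs, hd vs}#}"
    unfolding cycle_edges_def n_def[symmetric] by (simp only: mset_append mset.simps)
  then show ?thesis unfolding path_edges_conv_nth n_def by simp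
qed

lemma is_cycle_closed_path:
  "distinct P \<Longrightarrow> length P \<ge> 2 \<Longrightarrow> is_cycle (add_mset {last P, hd P} (path_edges P))"
  unfolding is_cycle_def by (metis cycle_edges_path_edges list.size(3) not_numeral_le_zero)

lemma cycle_edges_rotate:
  assumes "distinct vs" "length vs \<ge> 2" "{p, q} \<in># cycle_edges vs"
  obtains P where "distinct P" "length P \<ge> 2" "{p, q} = {last P, hd P}"
    "cycle_edges vs = add_mset {last P, hd P} (path_edges P)"
proof -
  have vs: "cycle_edges vs = add_mset {last vs, hd vs} (path_edges vs)"
    using assms(2) by (intro cycle_edges_path_edges) auto
  show ?thesis
  proof (cases "{p, q} = {last vs, hd vs}")
    case True then show ?thesis using that assms vs by blast
  next
    case False
    then have "{p, q} \<in># path_edges vs" using assms(3) vs by simp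
    then obtain xs x y ys where split: "vs = xs @ x # y # ys" and pq: "{p, q} = {x, y}"
      by (rule path_edges_memE)
    define P where "P = (y # ys) @ (xs @ [x])"
    have "add_mset {last vs, hd vs} (path_edges vs) = add_mset {last P, hd P} (path_edges P)"
      unfolding split P_def
      by (cases xs; cases ys)
        (simp_all add: path_edges_append path_edges_Cons insert_commute add_mset_commute)
    moreover have "distinct P" "length P \<ge> 2" "{p, q} = {last P, hd P}"
      using assms(1) split pq by (auto simp: P_def)
    ultimately show ?thesis using that vs by simp
  qed
qed

lemma is_cycle_open:
  assumes "is_cycle C" "{p, q} \<in># C" "p \<noteq> q"
  obtains P where "distinct P" "length P \<ge> 2" "hd P = p" "last P = q"
    "C = add_mset {p, q} (path_edges P)"
proof -
  obtain vs where vs: "distinct vs" "length vs \<ge> 2" "C = cycle_edges vs"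
    using assms(1) unfolding is_cycle_def by blast
  obtain P where P: "distinct P" "length P \<ge> 2" "{p, q} = {last P, hd P}"
    "C = add_mset {last P, hd P} (path_edges P)"
    using cycle_edges_rotate[OF vs(1,2)] assms(2) vs(3) by blast
  have C: "C = add_mset {p, q} (path_edges P)" using P(3,4) by simp
  show ?thesis
  proof (cases "hd P = p")
    case True
    then have "last P = q" using P(3) assms(3) by (metis doubleton_eq_iff)
    then show ?thesis using that True P(1,2) C by blast
  next
    case False
    then have "hd P = q" "last P = p" using P(3) by (metis doubleton_eq_iff)+
    moreover have "P \<noteq> []" using P(2) by auto
    ultimately have "hd (rev P) = p" "last (rev P) = q" by (simp_all add: hd_rev last_rev)
    moreover have "C = add_mset {p, q} (path_edges (rev P))" using C by (simp add: path_edges_rev)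
    ultimately show ?thesis using that[of "rev P"] P(1,2) by simp
  qed
qed

lemma is_cycle_splice:
  assumes C1: "is_cycle C1" "{a, c} \<in># C1" and C2: "is_cycle C2" "{a, c} \<in># C2"
    and "a \<noteq> c" and disjoint: "\<Union> (set_mset C1) \<inter> \<Union> (set_mset C2) \<subseteq> {a, c}"
  obtains C where "is_cycle C" "C1 + C2 = add_mset {a, c} (add_mset {a, c} C)"
proof -
  have "{c, a} \<in># C1" using C1(2) by (simp add: insert_commute)
  then obtain P1 where P1: "distinct P1" "length P1 \<ge> 2" "hd P1 = c" "last P1 = a"
    "C1 = add_mset {c, a} (path_edges P1)"
    using is_cycle_open[OF C1(1)] \<open>a \<noteq> c\<close> by blast
  obtain P2 where P2: "distinct P2" "length P2 \<ge> 2" "hd P2 = a" "last P2 = c"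
    "C2 = add_mset {a, c} (path_edges P2)"
    using is_cycle_open[OF C2] \<open>a \<noteq> c\<close> by blast
  obtain z T where P1_eq: "P1 = c # z # T" using P1(2,3) by (cases P1; cases "tl P1") auto
  obtain y R where P2_eq: "P2 = a # y # R" using P2(2,3) by (cases P2; cases "tl P2") auto
  show ?thesis
  proof (cases "R = []")
    case True
    then have "C2 = {#{a, c}, {a, c}#}" using P2 P2_eq by auto
    then show ?thesis using that C1(1) by simp
  next
    case False
    then have last_R: "last R = c" using P2(4) P2_eq by simp
    have "set P2 \<subseteq> \<Union> (set_mset C2)" using set_subset_path_edges[OF P2(2)] P2(5) by auto
    then have "set (y # R) \<subseteq> \<Union> (set_mset C2) - {a}" using P2(1) P2_eq by auto
    moreover have "set P1 \<subseteq> \<Union> (set_mset C1)" using set_subset_path_edges[OF P1(2)] P1(5) by auto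
    then have "set (z # T) \<subseteq> \<Union> (set_mset C1) - {c}" using P1(1) P1_eq by auto
    ultimately have "set (y # R) \<inter> set (z # T) = {}" using disjoint by blast
    then have "distinct ((y # R) @ (z # T))" using P1(1) P2(1) P1_eq P2_eq by auto
    moreover have
      "path_edges ((y # R) @ (z # T)) = path_edges (y # R) + path_edges (z # T) + {#{c, z}#}"
      by (simp only: path_edges_append) (simp add: last_R False)
    moreover have "last ((y # R) @ (z # T)) = a" using P1(4) P1_eq by simp
    ultimately have
      "is_cycle (add_mset {a, y} (path_edges (y # R) + path_edges (z # T) + {#{c, z}#}))"
      using is_cycle_closed_path[of "(y # R) @ (z # T)"] by simp
    moreover have "C1 + C2 = add_mset {a, c} (add_mset {a, c}
        (add_mset {a, y} (path_edges (y # R) + path_edges (z # T) + {#{c, z}#})))"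
      unfolding P1(5) P2(5) P1_eq P2_eq insert_commute[of c a] by (simp add: add_mset_commute)
    ultimately show ?thesis using that by blast
  qed
qed

section \<open>Cycle decompositions and gluing at a vertex\<close>

definition cycle_decomposition :: "'a set multiset list \<Rightarrow> 'a set multiset \<Rightarrow> bool" where
  "cycle_decomposition cs E \<longleftrightarrow> (\<forall>C\<in>set cs. is_cycle C) \<and> sum_list cs = E"

lemma cycle_decomposition_append:
  "cycle_decomposition cs1 E1 \<Longrightarrow> cycle_decomposition cs2 E2 \<Longrightarrow>
     cycle_decomposition (cs1 @ cs2) (E1 + E2)"
  unfolding cycle_decomposition_def by auto

lemma cycle_decomposition_Cons:
  "is_cycle C \<Longrightarrow> cycle_decomposition cs E \<Longrightarrow> cycle_decomposition (C # cs) (C + E)"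
  unfolding cycle_decomposition_def by auto

lemma cycle_decomposition_pick:
  assumes "cycle_decomposition cs E" "e \<in># E"
  obtains C R cs' where "is_cycle C" "e \<in># C" "E = C + R" "cycle_decomposition cs' R"
    "length cs = Suc (length cs')"
proof -
  have "e \<in># sum_list cs" using assms unfolding cycle_decomposition_def by simp
  then obtain C where C: "C \<in> set cs" "e \<in># C" by (induction cs) auto
  then obtain xs ys where "cs = xs @ C # ys" by (meson split_list)
  then show ?thesis
    using that[of C "sum_list (xs @ ys)" "xs @ ys"] C assms(1)
    by (auto simp: cycle_decomposition_def)
qed

lemma hajosI:
  assumes "eulerian V E \<Longrightarrow> \<exists>cs. cycle_decomposition cs E \<and>
    2 * int (length cs) \<le> int (card V) + int (mult_excess E) - 1"
  shows "hajos V E"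
  using assms unfolding hajos_def cycle_decomposition_def by blast

lemma hajosE:
  assumes "hajos V E" "eulerian V E"
  obtains cs where "cycle_decomposition cs E"
    "2 * int (length cs) \<le> int (card V) + int (mult_excess E) - 1"
  using assms unfolding hajos_def cycle_decomposition_def by blast

lemma hajos_cycle_graph: "is_cycle_graph V E \<Longrightarrow> hajos V E"
proof (rule hajosI)
  assume "is_cycle_graph V E"
  then obtain vs where vs: "distinct vs" "length vs \<ge> 3" "V = set vs" "E = cycle_edges vs"
    unfolding is_cycle_graph_def by blast
  then have "cycle_decomposition [E] E" unfolding cycle_decomposition_def is_cycle_def by auto
  moreover have "card V = length vs" using vs by (simp add: distinct_card)
  ultimately show "\<exists>cs. cycle_decomposition cs E \<and>
      2 * int (length cs) \<le> int (card V) + int (mult_excess E) - 1"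
    using vs(2) by force
qed

lemma eulerian_glue_part:
  assumes "finite V1" "card (V1 \<inter> V2) \<le> 1"
    and E1: "\<forall>e\<in>#E1. e \<subseteq> V1 \<and> card e = 2" and E2: "\<forall>e\<in>#E2. e \<subseteq> V2"
    and eul: "eulerian (V1 \<union> V2) (E1 + E2)"
  shows "eulerian V1 E1"
proof (cases "V1 = {}")
  case True then show ?thesis unfolding eulerian_def by simp
next
  case False
  obtain s where s: "s \<in> V1" "V1 \<inter> V2 \<subseteq> {s}"
  proof (cases "V1 \<inter> V2 = {}")
    case True then show ?thesis using that False by blast
  next
    case False
    then obtain s where "s \<in> V1 \<inter> V2" by blast
    moreover have "finite (V1 \<inter> V2)" using assms(1) by simp
    ultimately show ?thesis using that assms(2) card_le_Suc0_iff_eq[of "V1 \<inter> V2"] by auto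
  qed
  show ?thesis
  proof (rule eulerian_if_even_but_one[OF assms(1) E1 s(1)], intro ballI)
    fix x assume x: "x \<in> V1 - {s}"
    then have "degree E2 x = 0" using s(2) E2 by (intro degree_eq_0) auto
    then show "even (degree E1 x)"
      using eul x unfolding eulerian_def by (metis UnI1 Diff_iff degree_plus add_0_right)
  qed
qed

lemma hajos_glue:
  assumes fin: "finite V1" "finite V2" and shared: "card (V1 \<inter> V2) \<le> 1"
    and E1: "\<forall>e\<in>#E1. e \<subseteq> V1 \<and> card e = 2" and E2: "\<forall>e\<in>#E2. e \<subseteq> V2 \<and> card e = 2"
    and hajos1: "hajos V1 E1" and hajos2: "hajos V2 E2"
  shows "hajos (V1 \<union> V2) (E1 + E2)"
proof (rule hajosI)
  assume eul: "eulerian (V1 \<union> V2) (E1 + E2)"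
  have "eulerian V1 E1" using eulerian_glue_part[OF fin(1) shared E1 _ eul] E2 by blast
  then obtain cs1 where cs1: "cycle_decomposition cs1 E1"
    "2 * int (length cs1) \<le> int (card V1) + int (mult_excess E1) - 1"
    by (rule hajosE[OF hajos1])
  have "eulerian V2 E2"
  proof (rule eulerian_glue_part[OF fin(2), of V1 _ E1])
    show "card (V2 \<inter> V1) \<le> 1" using shared by (simp add: Int_commute)
    show "eulerian (V2 \<union> V1) (E2 + E1)" using eul by (simp add: Un_commute add.commute)
  qed (use E1 E2 in auto)
  then obtain cs2 where cs2: "cycle_decomposition cs2 E2"
    "2 * int (length cs2) \<le> int (card V2) + int (mult_excess E2) - 1"
    by (rule hajosE[OF hajos2])
  have "set_mset E1 \<inter> set_mset E2 = {}"
  proof (rule ccontr)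
    assume "set_mset E1 \<inter> set_mset E2 \<noteq> {}"
    then obtain e where "e \<in># E1" "e \<in># E2" by blast
    then have "e \<subseteq> V1 \<inter> V2" "card e = 2" using E1 E2 by auto
    then show False using card_mono[of "V1 \<inter> V2" e] fin shared by auto
  qed
  then have "mult_excess (E1 + E2) = mult_excess E1 + mult_excess E2" by (rule mult_excess_plus)
  moreover have "card (V1 \<union> V2) + card (V1 \<inter> V2) = card V1 + card V2"
    using fin by (rule card_Un_Int[symmetric])
  ultimately have
    "2 * int (length (cs1 @ cs2)) \<le> int (card (V1 \<union> V2)) + int (mult_excess (E1 + E2)) - 1"
    using cs1(2) cs2(2) shared by simp
  then show "\<exists>cs. cycle_decomposition cs (E1 + E2) \<and>
      2 * int (length cs) \<le> int (card (V1 \<union> V2)) + int (mult_excess (E1 + E2)) - 1"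
    using cycle_decomposition_append[OF cs1(1) cs2(1)] by blast
qed

section \<open>Undoing a 2.5-split\<close>

lemma is_ve_sep_sym: "is_ve_sep V E c u v \<Longrightarrow> is_ve_sep V E c v u"
  unfolding is_ve_sep_def insert_commute[of v u "{}"] by blast

locale ve_separation =
  fixes V :: "'a set" and E :: "'a set multiset" and c a b :: 'a
  assumes wf: "wf_graph V E" and biconnected: "biconnected V E" and sep: "is_ve_sep V E c a b"
begin

text \<open>\<open>Ca\<close> and \<open>Cb\<close> are the components of \<open>H - ab - c\<close> containing \<open>a\<close> and \<open>b\<close>;
  \<open>(Va, Ga)\<close> and \<open>(Vb, Gb)\<close> are the two graphs produced by the 2.5-split at \<open>a\<close>,
  with the virtual edge \<open>{a, c}\<close>.\<close>

definition "E0 = filter_mset (\<lambda>e. c \<notin> e) (E - {#{a, b}#})"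
definition "Ca = {x. reach E0 a x}"
definition "Cb = {x. reach E0 b x}"
definition "Ea = filter_mset (\<lambda>e. e \<subseteq> Ca \<union> {c}) E"
definition "Eb = filter_mset (\<lambda>e. e \<subseteq> Cb \<union> {c}) E"
definition "Va = Ca \<union> {c}"
definition "Ga = add_mset {a, c} Ea"
definition "Vb = insert a (Cb \<union> {c})"
definition "Gb = add_mset {b, a} (add_mset {a, c} Eb)"

lemma edges_E: "\<forall>e\<in>#E. e \<subseteq> V \<and> card e = 2" and finite_V: "finite V"
  using wf unfolding wf_graph_def by auto

lemma ab_in_E: "{a, b} \<in># E" and c_in_V: "c \<in> V" and c_neq: "c \<noteq> a" "c \<noteq> b"
  using sep unfolding is_ve_sep_def by auto

lemma a_neq_b: "a \<noteq> b"
  using edges_E ab_in_E by fastforce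

lemma a_in_V: "a \<in> V" and b_in_V: "b \<in> V"
  using edges_E ab_in_E by auto

lemma E0_edge: "e \<in># E0 \<Longrightarrow> e \<in># E \<and> c \<notin> e"
  unfolding E0_def by (auto dest: in_diffD)

lemma a_in_Ca: "a \<in> Ca" and b_in_Cb: "b \<in> Cb"
  unfolding Ca_def Cb_def by auto

lemma Ca_subset: "Ca \<subseteq> V - {c}" and Cb_subset: "Cb \<subseteq> V - {c}"
proof -
  have "y \<in> V - {c}" if "reach E0 x y" "x \<in> V - {c}" for x y
    using reach_endpoint_in_edge[OF that(1)] that(2) E0_edge edges_E by blast
  then show "Ca \<subseteq> V - {c}" "Cb \<subseteq> V - {c}"
    unfolding Ca_def Cb_def using a_in_V b_in_V c_neq by auto
qed

lemma reach_avoiding_c: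
  assumes "reach (filter_mset (\<lambda>e. c \<notin> e) E) x y"
  shows "reach E0 x y \<or> reach E0 x a \<or> reach E0 x b"
  using assms unfolding reach_def
proof (induction rule: rtranclp_induct)
  case (step y z)
  show ?case
  proof (cases "{y, z} = {a, b}")
    case True
    then have "y = a \<or> y = b" by (metis doubleton_eq_iff)
    then show ?thesis using step(3) unfolding reach_def by auto
  next
    case False
    then have "{y, z} \<in># E0" using step(2) unfolding E0_def by (auto simp: in_diff_count)
    then show ?thesis using step(3) unfolding reach_def by (meson rtranclp.rtrancl_into_rtrancl)
  qed
qed simp

lemma V_minus_c_subset: "V - {c} \<subseteq> Ca \<union> Cb"
proof
  fix x assume x: "x \<in> V - {c}"
  show "x \<in> Ca \<union> Cb"
  proof (cases "x = a")
    case True then show ?thesis using a_in_Ca by auto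
  next
    case False
    then have "reach (filter_mset (\<lambda>e. c \<notin> e) E) x a"
      using biconnected x a_in_V c_neq c_in_V unfolding biconnected_def by auto
    then have "reach E0 x a \<or> reach E0 x b" using reach_avoiding_c by (metis reach_trans)
    then show ?thesis unfolding Ca_def Cb_def by (auto intro: reach_sym)
  qed
qed

lemma Ca_Cb_disjoint: "Ca \<inter> Cb = {}"
proof (rule ccontr)
  assume "Ca \<inter> Cb \<noteq> {}"
  then have "reach E0 a b" unfolding Ca_def Cb_def by (auto intro: reach_sym reach_trans)
  then have from_a: "reach E0 a p" if "p \<in> V - {c}" for p
    using V_minus_c_subset that unfolding Ca_def Cb_def by (auto intro: reach_trans)
  have "connected_graph (V - {c}) E0"
    unfolding connected_graph_def
  proof (intro conjI ballI)
    show "V - {c} \<noteq> {}" using a_in_V c_neq by auto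
    fix p q assume "p \<in> V - {c}" "q \<in> V - {c}"
    then show "reach E0 p q" using from_a by (meson reach_sym reach_trans)
  qed
  then show False using sep unfolding is_ve_sep_def E0_def by simp
qed

lemma V_eq: "V = Ca \<union> Cb \<union> {c}"
  using V_minus_c_subset Ca_subset Cb_subset c_in_V by auto

lemma finite_Ca: "finite Ca" and finite_Cb: "finite Cb"
  using Ca_subset Cb_subset finite_V finite_subset by blast+

lemma c_notin_Ca: "c \<notin> Ca" and c_notin_Cb: "c \<notin> Cb" and a_notin_Cb: "a \<notin> Cb"
  using Ca_subset Cb_subset a_in_Ca Ca_Cb_disjoint by auto

lemma card_V: "card V = card Ca + card Cb + 1"
  unfolding V_eq using finite_Ca finite_Cb Ca_Cb_disjoint c_notin_Ca c_notin_Cb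
  by (simp add: card_Un_disjoint)

lemma edge_sides:
  assumes "e \<in># E - {#{a, b}#}"
  shows "e \<subseteq> Cb \<union> {c} \<longleftrightarrow> \<not> e \<subseteq> Ca \<union> {c}"
proof -
  have "e \<in># E" using assms by (auto dest: in_diffD)
  then obtain x y where e: "e = {x, y}" "x \<noteq> y" and xy: "x \<in> V" "y \<in> V"
    by (rule wf_graph_edgeE[OF wf])
  show ?thesis
  proof (cases "c \<in> e")
    case True
    then show ?thesis using e V_minus_c_subset xy Ca_Cb_disjoint c_notin_Ca c_notin_Cb by auto
  next
    case False
    then have "e \<in># E0" unfolding E0_def set_mset_filter mem_Collect_eq using assms by blast
    then have "reach E0 x y" using e reach_edge by auto
    then have "x \<in> Ca \<longleftrightarrow> y \<in> Ca" "x \<in> Cb \<longleftrightarrow> y \<in> Cb"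
      unfolding Ca_def Cb_def by (auto intro: reach_trans reach_sym)
    moreover have "x \<in> Ca \<union> Cb" "y \<in> Ca \<union> Cb" using V_minus_c_subset xy False e by auto
    ultimately show ?thesis using e Ca_Cb_disjoint False by auto
  qed
qed

lemma E_eq: "E = add_mset {a, b} (Ea + Eb)"
proof -
  define E' where "E' = E - {#{a, b}#}"
  have E': "E = add_mset {a, b} E'" unfolding E'_def using ab_in_E by simp
  have "\<not> {a, b} \<subseteq> Ca \<union> {c}" "\<not> {a, b} \<subseteq> Cb \<union> {c}"
    using a_in_Ca b_in_Cb Ca_Cb_disjoint c_neq by auto
  then have "Ea = filter_mset (\<lambda>e. e \<subseteq> Ca \<union> {c}) E'" "Eb = filter_mset (\<lambda>e. e \<subseteq> Cb \<union> {c}) E'"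
    unfolding Ea_def Eb_def by (subst E'; simp)+
  moreover have "filter_mset (\<lambda>e. e \<subseteq> Cb \<union> {c}) E' = filter_mset (\<lambda>e. \<not> e \<subseteq> Ca \<union> {c}) E'"
    using edge_sides unfolding E'_def by (intro filter_mset_cong) auto
  ultimately have "Ea + Eb = E'" by (metis multiset_partition)
  then show ?thesis using E' by simp
qed

text \<open>\<open>Ea\<close> and \<open>Eb\<close> are terms in \<open>E\<close>, so \<open>E_eq\<close> loops as a rewrite rule; it is only used
  backwards or at a chosen occurrence.\<close>

lemma a_notin_Eb: "e \<in># Eb \<Longrightarrow> a \<notin> e"
  unfolding Eb_def using a_notin_Cb c_neq by auto

lemma set_mset_Ea_Eb_disjoint: "set_mset Ea \<inter> set_mset Eb = {}"
proof (rule ccontr)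
  assume "set_mset Ea \<inter> set_mset Eb \<noteq> {}"
  then obtain e where e: "e \<in># Ea" "e \<in># Eb" by blast
  then have "e \<subseteq> {c}" "card e = 2"
    using Ca_Cb_disjoint edges_E unfolding Ea_def Eb_def by auto
  then show False using card_mono[of "{c}" e] by simp
qed

lemma wf_Ga: "wf_graph Va Ga"
  unfolding wf_graph_def Va_def Ga_def Ea_def using edges_E a_in_Ca c_neq finite_Ca by auto

lemma wf_Gb: "wf_graph Vb Gb"
  unfolding wf_graph_def Vb_def Gb_def Eb_def using edges_E b_in_Cb c_neq a_neq_b finite_Cb by auto

lemma degree_E: "degree E x = degree Ea x + degree Eb x + (if x \<in> {a, b} then 1 else 0)"
  using degree_add_mset[of "{a, b}" "Ea + Eb" x] unfolding E_eq[symmetric] by simp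

lemma degree_Ea_outside: "x \<notin> Va \<Longrightarrow> degree Ea x = 0"
  unfolding Ea_def Va_def by (intro degree_eq_0) auto

lemma degree_Eb_outside: "x \<notin> Cb \<union> {c} \<Longrightarrow> degree Eb x = 0"
  unfolding Eb_def by (intro degree_eq_0) auto

context
  assumes eulerian: "eulerian V E"
begin

lemma eulerian_Ga: "eulerian Va Ga"
proof (rule eulerian_if_even_but_one)
  show "finite Va" "\<forall>e\<in>#Ga. e \<subseteq> Va \<and> card e = 2" "c \<in> Va"
    using wf_Ga unfolding wf_graph_def Va_def by auto
  show "\<forall>y\<in>Va - {c}. even (degree Ga y)"
  proof
    fix y assume y: "y \<in> Va - {c}"
    then have "y \<in> Ca" "y \<notin> Cb \<union> {c}" "y \<noteq> b" "y \<in> V"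
      using b_in_Cb Ca_Cb_disjoint Ca_subset unfolding Va_def by auto
    then have "degree Ga y = degree E y"
      unfolding Ga_def degree_E using degree_Eb_outside by simp
    then show "even (degree Ga y)" using eulerian \<open>y \<in> V\<close> unfolding eulerian_def by simp
  qed
qed

lemma eulerian_Gb: "eulerian Vb Gb"
  unfolding eulerian_def
proof
  fix x assume x: "x \<in> Vb"
  have deg: "degree Gb x =
      degree Eb x + (if x \<in> {b, a} then 1 else 0) + (if x \<in> {a, c} then 1 else 0)"
    unfolding Gb_def by simp
  consider "x = a" | "x = c" | "x \<in> Cb" "x \<noteq> c" "x \<noteq> a" using x unfolding Vb_def by auto
  then show "even (degree Gb x)"
  proof cases
    case 1
    then show ?thesis using deg degree_Eb_outside a_notin_Cb c_neq by simp
  next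
    case 2
    have "even (degree Ea c + 1)"
      using eulerian_Ga unfolding eulerian_def Va_def Ga_def by (simp add: c_neq)
    moreover have "even (degree Ea c + degree Eb c)"
      using eulerian c_in_V c_neq unfolding eulerian_def degree_E by auto
    ultimately show ?thesis using deg 2 c_neq by simp
  next
    case 3
    then have "x \<notin> Va" "x \<in> V" using Ca_Cb_disjoint Cb_subset unfolding Va_def by auto
    then show ?thesis
      using eulerian deg 3 degree_Ea_outside unfolding eulerian_def degree_E by auto
  qed
qed

end

lemma card_Va_Vb: "card Va + card Vb = card V + 2"
  unfolding card_V Va_def Vb_def using finite_Ca finite_Cb c_notin_Ca c_notin_Cb a_notin_Cb c_neq
  by simp

lemma mult_excess_Ga_Gb: "mult_excess Ga + mult_excess Gb \<le> mult_excess E + 1"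
proof -
  have "{b, a} \<noteq> {a, c}" using c_neq a_neq_b by (metis doubleton_eq_iff)
  then have "{a, c} \<notin># Eb" "{b, a} \<notin># add_mset {a, c} Eb" using a_notin_Eb by auto
  then have "mult_excess Gb = mult_excess Eb"
    unfolding Gb_def by (simp add: mult_excess_add_mset_new)
  moreover have "mult_excess Ga \<le> mult_excess Ea + 1"
    unfolding Ga_def by (rule mult_excess_add_mset_le)
  moreover have "mult_excess Ea + mult_excess Eb \<le> mult_excess E"
    using mult_excess_le_add_mset[of "Ea + Eb" "{a, b}"]
    unfolding E_eq[symmetric] mult_excess_plus[OF set_mset_Ea_Eb_disjoint] .
  ultimately show ?thesis by simp
qed

lemma Ga_plus_Gb: "Ga + Gb = add_mset {a, c} (add_mset {a, c} E)"
  unfolding Ga_def Gb_def by (subst (3) E_eq) (simp add: insert_commute)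

lemma hajos_of_split:
  assumes hajos_a: "hajos Va Ga" and hajos_b: "hajos Vb Gb"
  shows "hajos V E"
proof (rule hajosI)
  assume eul: "eulerian V E"
  obtain cs1 where cs1: "cycle_decomposition cs1 Ga"
      "2 * int (length cs1) \<le> int (card Va) + int (mult_excess Ga) - 1"
    using hajosE[OF hajos_a eulerian_Ga[OF eul]] by blast
  obtain cs2 where cs2: "cycle_decomposition cs2 Gb"
      "2 * int (length cs2) \<le> int (card Vb) + int (mult_excess Gb) - 1"
    using hajosE[OF hajos_b eulerian_Gb[OF eul]] by blast
  have "{a, c} \<in># Ga" unfolding Ga_def by simp
  then obtain C1 R1 cs1' where C1: "is_cycle C1" "{a, c} \<in># C1" "Ga = C1 + R1"
      "cycle_decomposition cs1' R1" "length cs1 = Suc (length cs1')"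
    by (rule cycle_decomposition_pick[OF cs1(1)])
  have "{a, c} \<in># Gb" unfolding Gb_def by simp
  then obtain C2 R2 cs2' where C2: "is_cycle C2" "{a, c} \<in># C2" "Gb = C2 + R2"
      "cycle_decomposition cs2' R2" "length cs2 = Suc (length cs2')"
    by (rule cycle_decomposition_pick[OF cs2(1)])
  have "\<Union> (set_mset C1) \<subseteq> Va" using wf_Ga C1(3) unfolding wf_graph_def by auto
  moreover have "\<Union> (set_mset C2) \<subseteq> Vb" using wf_Gb C2(3) unfolding wf_graph_def by auto
  moreover have "Va \<inter> Vb \<subseteq> {a, c}" unfolding Va_def Vb_def using Ca_Cb_disjoint by auto
  ultimately obtain C where C: "is_cycle C" "C1 + C2 = add_mset {a, c} (add_mset {a, c} C)"
    using is_cycle_splice[OF C1(1,2) C2(1,2)] c_neq by blast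
  have "add_mset {a, c} (add_mset {a, c} E) = (C1 + C2) + (R1 + R2)"
    using Ga_plus_Gb unfolding C1(3) C2(3) by (simp add: ac_simps)
  then have "E = C + (R1 + R2)" unfolding C(2) by simp
  then have "cycle_decomposition (C # cs1' @ cs2') E"
    using cycle_decomposition_Cons[OF C(1) cycle_decomposition_append[OF C1(4) C2(4)]] by simp
  moreover have "2 * int (length (C # cs1' @ cs2')) \<le> int (card V) + int (mult_excess E) - 1"
    using cs1(2) cs2(2) C1(5) C2(5) card_Va_Vb mult_excess_Ga_Gb by simp
  ultimately show "\<exists>cs. cycle_decomposition cs E \<and>
      2 * int (length cs) \<le> int (card V) + int (mult_excess E) - 1" by blast
qed

lemma ve_separation_swapped: "ve_separation V E c b a"
  using wf biconnected is_ve_sep_sym[OF sep] by unfold_locales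

lemma swapped_sides:
  "ve_separation.Ca E c b a = Cb" "ve_separation.Cb E c b a = Ca"
  "ve_separation.Ea E c b a = Eb" "ve_separation.Eb E c b a = Ea"
proof -
  interpret swapped: ve_separation V E c b a by (rule ve_separation_swapped)
  have "swapped.E0 = E0" unfolding swapped.E0_def E0_def by (simp add: insert_commute)
  then show "swapped.Ca = Cb" "swapped.Cb = Ca"
    unfolding swapped.Ca_def swapped.Cb_def Ca_def Cb_def by simp_all
  then show "swapped.Ea = Eb" "swapped.Eb = Ea"
    unfolding swapped.Ea_def swapped.Eb_def Ea_def Eb_def by simp_all
qed

text \<open>A path from \<open>a\<close> to \<open>c\<close> avoiding \<open>b\<close> has to leave \<open>Ca\<close> through an edge to \<open>c\<close>.\<close>

lemma Ea_meets_c: "\<exists>e\<in>#Ea. c \<in> e"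
proof -
  have "z \<in> Ca \<or> (\<exists>e\<in>#Ea. c \<in> e)" if "reach (filter_mset (\<lambda>e. b \<notin> e) E) a z" for z
    using that unfolding reach_def
  proof (induction rule: rtranclp_induct)
    case base then show ?case using a_in_Ca by simp
  next
    case (step y z)
    have yz: "{y, z} \<in># E" "b \<notin> {y, z}" using step(2) by auto
    show ?case
    proof (cases "y \<in> Ca")
      case False then show ?thesis using step(3) by simp
    next
      case y: True
      show ?thesis
      proof (cases "c \<in> {y, z}")
        case True
        then have "{y, z} \<in># Ea" unfolding Ea_def using yz y c_notin_Ca by auto
        then show ?thesis using True by blast
      next
        case False
        then have "{y, z} \<in># E0" unfolding E0_def using yz by (auto simp: in_diff_count)
        then have "reach E0 y z" by (rule reach_edge)
        then have "z \<in> Ca" using y unfolding Ca_def by (metis mem_Collect_eq reach_trans)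
        then show ?thesis by simp
      qed
    qed
  qed
  moreover have "reach (filter_mset (\<lambda>e. b \<notin> e) E) a c"
    using biconnected a_in_V c_in_V b_in_V c_neq a_neq_b unfolding biconnected_def by auto
  ultimately show ?thesis using c_notin_Ca by blast
qed

lemma small_side:
  assumes "size Ea \<le> 1"
  shows "Ca = {a}" "Ea = {#{a, c}#}"
proof -
  obtain e where e: "e \<in># Ea" "c \<in> e" using Ea_meets_c by blast
  then have Ea: "Ea = {#e#}" using assms by (cases Ea) (auto simp: size_eq_0_iff_empty)
  show Ca: "Ca = {a}"
  proof (rule ccontr)
    assume "Ca \<noteq> {a}"
    then obtain x where "reach E0 a x" "x \<noteq> a" using a_in_Ca unfolding Ca_def by blast
    then obtain y where y: "{a, y} \<in># E0" using reach_first_edge by metis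
    then have "y \<in> Ca" unfolding Ca_def by (simp add: reach_edge)
    then have "{a, y} \<in># Ea" unfolding Ea_def using y E0_edge a_in_Ca by auto
    then show False using Ea e(2) y E0_edge by auto
  qed
  have "card e = 2" "e \<subseteq> {a, c}" using e(1) edges_E Ca unfolding Ea_def by auto
  then have "e = {a, c}" using card_subset_eq[of "{a, c}" e] c_neq by auto
  then show "Ea = {#{a, c}#}" using Ea by simp
qed

lemma triangle_if_small_sides:
  assumes "size Ea \<le> 1" "size Eb \<le> 1"
  shows "triangle V E"
proof -
  have Cb: "Cb = {b}" and Eb: "Eb = {#{b, c}#}"
    using ve_separation.small_side[OF ve_separation_swapped] assms(2) unfolding swapped_sides
    by blast+
  have "V = {a, b, c}" unfolding V_eq Cb small_side(1)[OF assms(1)] by blast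
  moreover have "E = {#{a, b}, {b, c}, {a, c}#}"
  proof -
    have "E = add_mset {a, b} (Ea + Eb)" by (rule E_eq)
    also have "\<dots> = {#{a, b}, {b, c}, {a, c}#}"
      unfolding Eb small_side(2)[OF assms(1)] by (simp add: add_mset_commute)
    finally show ?thesis .
  qed
  moreover have "distinct [a, b, c]" using a_neq_b c_neq by auto
  ultimately show ?thesis unfolding triangle_def by blast
qed

lemma pieces_smaller:
  assumes "2 \<le> size Ea"
  shows "card Va + size Ga < card V + size E" "card Vb + size Gb < card V + size E"
proof -
  have "size E = size Ea + size Eb + 1" using arg_cong[OF E_eq, of size] by simp
  moreover have "card Ca \<ge> 1" "card Cb \<ge> 1"
    using a_in_Ca b_in_Cb finite_Ca finite_Cb by (auto simp: Suc_le_eq card_gt_0_iff)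
  ultimately show "card Va + size Ga < card V + size E" "card Vb + size Gb < card V + size E"
    using assms card_V finite_Ca finite_Cb c_notin_Ca c_notin_Cb a_notin_Cb c_neq
    unfolding Va_def Ga_def Vb_def Gb_def by simp_all
qed

lemma hajos_via_split:
  assumes "2 \<le> size Ea"
    and smaller: "\<And>V' (E' :: 'a set multiset). wf_graph V' E' \<Longrightarrow>
      card V' + size E' < card V + size E \<Longrightarrow> hajos V' E'"
  shows "hajos V E"
  using hajos_of_split smaller[OF wf_Ga pieces_smaller(1)[OF assms(1)]]
    smaller[OF wf_Gb pieces_smaller(2)[OF assms(1)]] by blast

lemma hajos_via_separation:
  assumes "\<not> triangle V E"
    and smaller: "\<And>V' (E' :: 'a set multiset). wf_graph V' E' \<Longrightarrow>
      card V' + size E' < card V + size E \<Longrightarrow> hajos V' E'"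
  shows "hajos V E"
proof -
  consider "2 \<le> size Ea" | "2 \<le> size Eb" | "size Ea \<le> 1" "size Eb \<le> 1" by linarith
  then show ?thesis
  proof cases
    case 1
    then show ?thesis using hajos_via_split smaller by blast
  next
    case 2
    then show ?thesis
      using ve_separation.hajos_via_split[OF ve_separation_swapped] smaller
      unfolding swapped_sides by blast
  next
    case 3
    then show ?thesis using triangle_if_small_sides assms(1) by blast
  qed
qed

end

section \<open>From the 2.5-connected components to the graph\<close>

abbreviation piece_wf :: "'a piece \<Rightarrow> bool" where
  "piece_wf P \<equiv> wf_graph (fst P) (image_mset fst (snd P))"

abbreviation piece_hajos :: "'a piece \<Rightarrow> bool" where
  "piece_hajos P \<equiv> hajos (fst P) (image_mset fst (snd P))"

lemma merge_steps_reflect_hajos: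
  "merge_step\<^sup>*\<^sup>* F F' \<Longrightarrow> \<forall>P\<in>#F'. piece_hajos P \<Longrightarrow> \<forall>P\<in>#F. piece_hajos P"
proof (induction rule: converse_rtranclp_induct)
  case (step F F'')
  then obtain V1 E1 V2 E2 rest where
    "F = add_mset (V1, E1) (add_mset (V2, E2) rest)" "\<forall>P\<in>#rest. piece_hajos P"
    "is_cycle_graph V1 (image_mset fst E1)" "is_cycle_graph V2 (image_mset fst E2)"
    unfolding merge_step_def by fastforce
  then show ?case using hajos_cycle_graph by auto
qed

lemma split_stepE:
  assumes "split_step F F'" and wf: "\<forall>P\<in>#F. piece_wf P"
  obtains V L rest G c a b Pa Pb where
    "F = add_mset (V, L) rest" "F' = add_mset Pa (add_mset Pb rest)"
    "G = image_mset fst L" "ve_separation V G c a b"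
    "fst Pa = ve_separation.Va G c a b" "image_mset fst (snd Pa) = ve_separation.Ga G c a b"
    "fst Pb = ve_separation.Vb G c a b" "image_mset fst (snd Pb) = ve_separation.Gb G c a b"
proof -
  obtain V L rest c u v l a b k where
    F: "F = add_mset (V, L) rest" and bic: "biconnected V (image_mset fst L)"
    and sep: "is_ve_sep V (image_mset fst L) c u v"
    and ab: "(a, b) = (u, v) \<or> (a, b) = (v, u)"
    and F': "let E0 = filter_mset (\<lambda>e. c \<notin> e) (image_mset fst L - {#{u, v}#});
          Ca = {x. reach E0 a x};
          Cb = {x. reach E0 b x};
          Ea = filter_mset (\<lambda>e. fst e \<subseteq> Ca \<union> {c}) L;
          Eb = filter_mset (\<lambda>e. fst e \<subseteq> Cb \<union> {c}) L
      in size Ea \<ge> 2 \<and>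
         (\<forall>P\<in>#F. \<forall>e\<in>#snd P. snd e \<noteq> Some k) \<and>
         F' = add_mset (Ca \<union> {c}, add_mset ({a, c}, Some k) Ea)
                (add_mset (insert a (Cb \<union> {c}),
                           add_mset ({b, a}, l) (add_mset ({a, c}, Some k) Eb)) rest)"
    using assms(1) unfolding split_step_def by blast
  define G where "G = image_mset fst L"
  have uv: "{u, v} = {a, b}" using ab by (auto simp: insert_commute)
  have "is_ve_sep V G c a b" using sep ab is_ve_sep_sym unfolding G_def by auto
  then interpret ve_separation V G c a b
    using wf F bic unfolding G_def by unfold_locales auto
  define E0' where "E0' = filter_mset (\<lambda>e. c \<notin> e) (image_mset fst L - {#{u, v}#})"
  have F'_eq: "F' = add_mset ({x. reach E0' a x} \<union> {c},
        add_mset ({a, c}, Some k) (filter_mset (\<lambda>e. fst e \<subseteq> {x. reach E0' a x} \<union> {c}) L))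
      (add_mset (insert a ({x. reach E0' b x} \<union> {c}),
        add_mset ({b, a}, l) (add_mset ({a, c}, Some k)
          (filter_mset (\<lambda>e. fst e \<subseteq> {x. reach E0' b x} \<union> {c}) L))) rest)"
    using F' unfolding Let_def E0'_def by blast
  have "E0' = E0" unfolding E0'_def E0_def uv G_def[symmetric] ..
  then have "{x. reach E0' a x} = Ca" "{x. reach E0' b x} = Cb" unfolding Ca_def Cb_def by simp_all
  note F'_eq = F'_eq[unfolded this, folded Va_def Vb_def]
  have "image_mset fst (filter_mset (\<lambda>e. fst e \<subseteq> X) L) = filter_mset (\<lambda>e. e \<subseteq> X) G"
    for X unfolding G_def by (simp add: filter_mset_image_mset)
  then show ?thesis
    using that[OF F F'_eq G_def ve_separation_axioms]
    unfolding Ga_def Gb_def Ea_def Eb_def Va_def Vb_def by simp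
qed

lemma split_step_preserves_wf:
  assumes "split_step F F'" "\<forall>P\<in>#F. piece_wf P"
  shows "\<forall>P\<in>#F'. piece_wf P"
  using assms(2) ve_separation.wf_Ga ve_separation.wf_Gb by (cases rule: split_stepE[OF assms]) auto

lemma split_step_reflects_hajos:
  assumes "split_step F F'" "\<forall>P\<in>#F. piece_wf P" "\<forall>P\<in>#F'. piece_hajos P"
  shows "\<forall>P\<in>#F. piece_hajos P"
proof (cases rule: split_stepE[OF assms(1,2)])
  case (1 V L rest G c a b Pa Pb)
  then have "hajos V G" using assms(3) by (auto intro: ve_separation.hajos_of_split)
  then show ?thesis using 1 assms(3) by auto
qed

lemma split_steps_reflect_hajos:
  "split_step\<^sup>*\<^sup>* F F' \<Longrightarrow> \<forall>P\<in>#F. piece_wf P \<Longrightarrow> \<forall>P\<in>#F'. piece_hajos P \<Longrightarrow>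
     \<forall>P\<in>#F. piece_hajos P"
proof (induction rule: converse_rtranclp_induct)
  case (step F F'')
  then show ?case using split_step_preserves_wf split_step_reflects_hajos by blast
qed

lemma hajos_of_decomp25:
  assumes "wf_graph V E" "decomp25 V E F" "\<forall>P\<in>#F. piece_hajos P"
  shows "hajos V E"
proof -
  let ?P = "(V, image_mset (\<lambda>e. (e, None :: nat option)) E)"
  obtain F1 where "split_step\<^sup>*\<^sup>* {#?P#} F1" "merge_step\<^sup>*\<^sup>* F1 F"
    using assms(2) unfolding decomp25_def by blast
  moreover have "image_mset fst (snd ?P) = E" by (simp add: image_mset.compositionality comp_def)
  ultimately show ?thesis
    using split_steps_reflect_hajos merge_steps_reflect_hajos assms(1,3) by fastforce
qed

section \<open>Reduction to 2.5-connected graphs\<close>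

lemma not_biconnected_cut:
  assumes wf: "wf_graph V E" and "\<not> biconnected V E"
  obtains A S where "A \<subseteq> V" "S \<subseteq> V" "A \<inter> S = {}" "card S \<le> 1" "A \<noteq> {}" "\<not> V \<subseteq> A \<union> S"
    "\<forall>e\<in>#E. e \<subseteq> A \<union> S \<or> e \<inter> A = {}"
proof (cases "connected_graph V E")
  case False
  then obtain x y where xy: "x \<in> V" "y \<in> V" "\<not> reach E x y"
    using wf unfolding connected_graph_def wf_graph_def by auto
  define A where "A = {z \<in> V. reach E x z}"
  have "e \<subseteq> A \<union> {} \<or> e \<inter> A = {}" if e_in: "e \<in># E" for e
  proof -
    obtain p q where pq: "e = {p, q}" "p \<in> V" "q \<in> V" using wf_graph_edgeE[OF wf e_in] by blast
    have "reach E x p \<longleftrightarrow> reach E x q" using e_in pq(1) reach_edge_iff[of p q E x] by simp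
    then show ?thesis using pq unfolding A_def by auto
  qed
  moreover have "A \<subseteq> V" "x \<in> A" "y \<notin> A" using xy unfolding A_def by auto
  ultimately show ?thesis using that[of A "{}"] xy by auto
next
  case True
  define Ew where "Ew w = filter_mset (\<lambda>e. w \<notin> e) E" for w
  obtain u v w where uvw: "u \<in> V" "v \<in> V" "w \<in> V" "u \<noteq> v" "u \<noteq> w" "v \<noteq> w"
      "\<not> reach (Ew w) u v"
    using assms(2) True unfolding biconnected_def Ew_def by auto
  define A where "A = {z \<in> V. z \<noteq> w \<and> reach (Ew w) u z}"
  have w: "w \<notin> A" unfolding A_def by simp
  have "e \<subseteq> A \<union> {w} \<or> e \<inter> A = {}" if e_in: "e \<in># E" for e
  proof -
    obtain p q where pq: "e = {p, q}" "p \<in> V" "q \<in> V" using wf_graph_edgeE[OF wf e_in] by blast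
    show ?thesis
    proof (cases "w \<in> e")
      case True then show ?thesis using pq w by auto
    next
      case False
      then have "{p, q} \<in># Ew w" using e_in pq(1) unfolding Ew_def by simp
      then have "reach (Ew w) u p \<longleftrightarrow> reach (Ew w) u q" by (rule reach_edge_iff)
      then show ?thesis using pq False unfolding A_def by auto
    qed
  qed
  moreover have "A \<subseteq> V" "u \<in> A" "v \<notin> A" using uvw unfolding A_def by auto
  ultimately show ?thesis using that[of A "{w}"] uvw w by auto
qed

lemma hajos_via_cut:
  fixes V :: "'a set"
  assumes wf: "wf_graph V E"
    and cut: "A \<subseteq> V" "S \<subseteq> V" "A \<inter> S = {}" "card S \<le> 1" "A \<noteq> {}" "\<not> V \<subseteq> A \<union> S"
      "\<forall>e\<in>#E. e \<subseteq> A \<union> S \<or> e \<inter> A = {}"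
    and smaller: "\<And>V' (E' :: 'a set multiset). wf_graph V' E' \<Longrightarrow>
      card V' + size E' < card V + size E \<Longrightarrow> hajos V' E'"
  shows "hajos V E"
proof -
  define E1 where "E1 = filter_mset (\<lambda>e. e \<inter> A \<noteq> {}) E"
  define E2 where "E2 = filter_mset (\<lambda>e. e \<inter> A = {}) E"
  have fin: "finite V" and edges: "\<forall>e\<in>#E. e \<subseteq> V \<and> card e = 2"
    using wf unfolding wf_graph_def by auto
  have fin1: "finite (A \<union> S)" and fin2: "finite (V - A)"
    using cut(1,2) fin by (auto intro: finite_subset)
  have E1: "\<forall>e\<in>#E1. e \<subseteq> A \<union> S \<and> card e = 2" using edges cut(7) unfolding E1_def by auto
  have E2: "\<forall>e\<in>#E2. e \<subseteq> V - A \<and> card e = 2" using edges unfolding E2_def by auto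
  have "hajos (A \<union> S) E1"
  proof (rule smaller)
    show "wf_graph (A \<union> S) E1" unfolding wf_graph_def using fin1 E1 cut(5) by auto
    have "card (A \<union> S) < card V" using cut fin by (intro psubset_card_mono) auto
    moreover have "size E1 \<le> size E" unfolding E1_def by (rule size_filter_mset_lesseq)
    ultimately show "card (A \<union> S) + size E1 < card V + size E" by linarith
  qed
  moreover have "hajos (V - A) E2"
  proof (rule smaller)
    show "wf_graph (V - A) E2" unfolding wf_graph_def using fin2 E2 cut(1,2,3,6) by auto
    have "card (V - A) < card V" using cut fin by (intro psubset_card_mono) auto
    moreover have "size E2 \<le> size E" unfolding E2_def by (rule size_filter_mset_lesseq)
    ultimately show "card (V - A) + size E2 < card V + size E" by linarith
  qed
  moreover have "(A \<union> S) \<union> (V - A) = V" "(A \<union> S) \<inter> (V - A) = S" using cut(1-3) by auto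
  moreover have "E1 + E2 = E"
    using multiset_partition[of E "\<lambda>e. e \<inter> A \<noteq> {}"] unfolding E1_def E2_def by simp
  ultimately show ?thesis using hajos_glue[OF fin1 fin2 _ E1 E2] cut(4) by metis
qed

lemma hajos_if_conn25_hajos:
  fixes V :: "'a set"
  assumes conn25_hajos: "\<And>V (E :: 'a set multiset). wf_graph V E \<Longrightarrow> conn25 V E \<Longrightarrow> hajos V E"
  shows "wf_graph V E \<Longrightarrow> hajos V E"
proof (induction "card V + size E" arbitrary: V E rule: less_induct)
  case less
  have smaller: "\<And>V' (E' :: 'a set multiset). wf_graph V' E' \<Longrightarrow>
      card V' + size E' < card V + size E \<Longrightarrow> hajos V' E'"
    using less.hyps by blast
  show ?case
  proof (cases "biconnected V E")
    case False
    then obtain A S where "A \<subseteq> V" "S \<subseteq> V" "A \<inter> S = {}" "card S \<le> 1" "A \<noteq> {}"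
        "\<not> V \<subseteq> A \<union> S" "\<forall>e\<in>#E. e \<subseteq> A \<union> S \<or> e \<inter> A = {}"
      by (rule not_biconnected_cut[OF less.prems])
    from hajos_via_cut[OF less.prems this smaller] show ?thesis .
  next
    case biconnected: True
    show ?thesis
    proof (cases "conn25 V E")
      case True then show ?thesis using conn25_hajos less.prems by blast
    next
      case False
      then obtain c u v where "ve_separation V E c u v" "\<not> triangle V E"
        using biconnected less.prems unfolding conn25_def by (auto intro: ve_separation.intro)
      then show ?thesis using smaller by (rule ve_separation.hajos_via_separation)
    qed
  qed
qed

theorem theorem11:
  shows "(\<forall>(V::'a set) E. wf_graph V E \<and> biconnected V E \<and>
            (\<exists>F. decomp25 V E F \<and> (\<forall>P\<in>#F. hajos (fst P) (image_mset fst (snd P))))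
            \<longrightarrow> hajos V E) \<and>
         ((\<forall>(V::'a set) E. wf_graph V E \<longrightarrow> hajos V E) \<longleftrightarrow>
          (\<forall>(V::'a set) E. wf_graph V E \<and> conn25 V E \<longrightarrow> hajos V E))"
proof -
  have "hajos V E" if "wf_graph V E" "\<exists>F. decomp25 V E F \<and> (\<forall>P\<in>#F. piece_hajos P)"
    for V :: "'a set" and E
    using that hajos_of_decomp25 by blast
  moreover have "hajos V E"
    if "\<forall>(V::'a set) E. wf_graph V E \<and> conn25 V E \<longrightarrow> hajos V E" "wf_graph V E"
    for V :: "'a set" and E
    using hajos_if_conn25_hajos that by blast
  ultimately show ?thesis by blast
qed

end
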